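(* Let $G$ be any connected graph on $N\ge2$ vertices and, for $x\ge0$, let $$\rho_N(x)=\frac{\mathbb{1}+x|\psi_G\rangle\langle\psi_G|}{2^N+x}$$ be the maximally (globally) depolarized graph state. If $x\le 2$, equivalently if the fidelity $\langle\psi_G|\rho_N(x)|\psi_G\rangle=(1+x)/(2^N+x)$ is at most $3/(2^N+2)$, then $\rho_N(x)$ cannot be purified to $|\psi_G\rangle$ by any protocol.
   Context: Graph state $|\psi_G\rangle$: common $+1$ eigenstate of $K_i=X_i\prod_{\{i,j\}\in E_G}Z_j$ (equivalently $|+\rangle^{\otimes N}$ followed by controlled-phase gates along every edge). Purification: each qubit held by a distinct party holding that qubit from arbitrarily many copies; using SLOCC they must produce $|\psi_G\rangle$ with fidelity arbitrarily close to 1. Known input: a two-qubit Bell-diagonal state with weight $\lambda_{00}$ on the target Bell state is purifiable iff $\lambda_{00}>1/2$. *)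

theory Defs
  imports Complex_Main "HOL-Library.FuncSet"
begin

definition simple_graph :: "nat \<Rightarrow> (nat \<Rightarrow> nat \<Rightarrow> bool) \<Rightarrow> bool" where
  "simple_graph N E \<longleftrightarrow>
     (\<forall>i j. E i j \<longrightarrow> i < N \<and> j < N \<and> i \<noteq> j) \<and> (\<forall>i j. E i j \<longrightarrow> E j i)"

definition connected_graph :: "nat \<Rightarrow> (nat \<Rightarrow> nat \<Rightarrow> bool) \<Rightarrow> bool" where
  "connected_graph N E \<longleftrightarrow> simple_graph N E \<and> (\<forall>i<N. \<forall>j<N. E\<^sup>*\<^sup>* i j)"

definition basis :: "nat \<Rightarrow> (nat \<Rightarrow> bool) set" where
  "basis N = PiE {..<N} (\<lambda>_. UNIV)"

(* |psi_G> = prod_{edges} CZ |+>^N, whose amplitude on |z> is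
   2^(-N/2) (-1)^(number of edges {i,j} with z_i = z_j = 1). *)
definition graph_state :: "nat \<Rightarrow> (nat \<Rightarrow> nat \<Rightarrow> bool) \<Rightarrow> (nat \<Rightarrow> bool) \<Rightarrow> complex" where
  "graph_state N E z =
     complex_of_real ((-1) ^ card {(i, j). i < j \<and> j < N \<and> E i j \<and> z i \<and> z j} / sqrt (2 ^ N))"

definition depol_state ::
  "nat \<Rightarrow> (nat \<Rightarrow> nat \<Rightarrow> bool) \<Rightarrow> real \<Rightarrow> (nat \<Rightarrow> bool) \<Rightarrow> (nat \<Rightarrow> bool) \<Rightarrow> complex" where
  "depol_state N E x z w =
     ((if z = w then 1 else 0) + complex_of_real x * graph_state N E z * cnj (graph_state N E w))
       / complex_of_real (2 ^ N + x)"

(* Basis labels of k copies of an N-qubit state, grouped by party: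
   b i j = bit of qubit i in copy j. Party i holds the qubits b i 0, ..., b i (k-1). *)
definition copies_basis :: "nat \<Rightarrow> nat \<Rightarrow> (nat \<Rightarrow> nat \<Rightarrow> bool) set" where
  "copies_basis N k = PiE {..<N} (\<lambda>_. PiE {..<k} (\<lambda>_. UNIV))"

definition copy_of :: "nat \<Rightarrow> (nat \<Rightarrow> nat \<Rightarrow> bool) \<Rightarrow> nat \<Rightarrow> (nat \<Rightarrow> bool)" where
  "copy_of N b j = (\<lambda>i\<in>{..<N}. b i j)"

definition tensor_power ::
  "nat \<Rightarrow> nat \<Rightarrow> ((nat \<Rightarrow> bool) \<Rightarrow> (nat \<Rightarrow> bool) \<Rightarrow> complex)
     \<Rightarrow> (nat \<Rightarrow> nat \<Rightarrow> bool) \<Rightarrow> (nat \<Rightarrow> nat \<Rightarrow> bool) \<Rightarrow> complex" where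
  "tensor_power N k rho b b' = (\<Prod>j<k. rho (copy_of N b j) (copy_of N b' j))"

(* SLOCC branch: party i applies a local operator A i : C^(2^k) \<rightarrow> C^2, given by its
   matrix entries A i c v (output bit c, input label v : {..<k} \<rightarrow> bool). *)
definition slocc_output ::
  "nat \<Rightarrow> nat \<Rightarrow> (nat \<Rightarrow> bool \<Rightarrow> (nat \<Rightarrow> bool) \<Rightarrow> complex)
     \<Rightarrow> ((nat \<Rightarrow> nat \<Rightarrow> bool) \<Rightarrow> (nat \<Rightarrow> nat \<Rightarrow> bool) \<Rightarrow> complex)
     \<Rightarrow> (nat \<Rightarrow> bool) \<Rightarrow> (nat \<Rightarrow> bool) \<Rightarrow> complex" where
  "slocc_output N k A R c c' =
     (\<Sum>b\<in>copies_basis N k. \<Sum>b'\<in>copies_basis N k.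
        (\<Prod>i<N. A i (c i) (b i)) * R b b' * (\<Prod>i<N. cnj (A i (c' i) (b' i))))"

definition trace_op :: "nat \<Rightarrow> ((nat \<Rightarrow> bool) \<Rightarrow> (nat \<Rightarrow> bool) \<Rightarrow> complex) \<Rightarrow> complex" where
  "trace_op N S = (\<Sum>c\<in>basis N. S c c)"

definition fidelity ::
  "nat \<Rightarrow> ((nat \<Rightarrow> bool) \<Rightarrow> complex) \<Rightarrow> ((nat \<Rightarrow> bool) \<Rightarrow> (nat \<Rightarrow> bool) \<Rightarrow> complex) \<Rightarrow> real" where
  "fidelity N phi S =
     Re ((\<Sum>c\<in>basis N. \<Sum>c'\<in>basis N. cnj (phi c) * S c c' * phi c') / trace_op N S)"

(* rho (an N-qubit state, one qubit per party) is purifiable to phi iff for every eps > 0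
   there is a number k of copies and an SLOCC branch (product of local operators) with
   nonzero success probability whose normalised output has fidelity >= 1 - eps with phi. *)
definition purifiable ::
  "nat \<Rightarrow> ((nat \<Rightarrow> bool) \<Rightarrow> (nat \<Rightarrow> bool) \<Rightarrow> complex) \<Rightarrow> ((nat \<Rightarrow> bool) \<Rightarrow> complex) \<Rightarrow> bool" where
  "purifiable N rho phi \<longleftrightarrow>
     (\<forall>\<epsilon>>0. \<exists>k A. let S = slocc_output N k A (tensor_power N k rho) in
        trace_op N S \<noteq> 0 \<and> fidelity N phi S \<ge> 1 - \<epsilon>)"

end

theory Submission
  imports Defs "HOL-Analysis.Convex"
begin

(* Cut the graph between its last vertex n and the others. Since n has a neighbour, the graph
   state is maximally entangled across this cut: conditioned on qubit n, the other qubits are in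
   two orthogonal states of squared norm 1/2. For x <= 2 the depolarized state is separable across
   the cut, i.e. a positive combination of product vectors. Tensor powers and local operators map
   product vectors to product vectors, so every SLOCC output is separable across the cut as well,
   and a separable state has fidelity at most 1/2 with a state that is maximally entangled across
   the cut. *)

lemma sum_PiE_lessThan_Suc:
  fixes F :: "_ \<Rightarrow> 'c::comm_monoid_add"
  assumes "\<And>i. i \<le> n \<Longrightarrow> finite (T i)"
  shows "(\<Sum>b\<in>PiE {..<Suc n} T. F b) = (\<Sum>y\<in>T n. \<Sum>r\<in>PiE {..<n} T. F (r(n := y)))"
proof -
  have "(\<Sum>b\<in>PiE {..<Suc n} T. F b) = (\<Sum>b\<in>(\<lambda>(y, r). r(n := y)) ` (T n \<times> PiE {..<n} T). F b)"
    by (simp add: lessThan_Suc PiE_insert_eq)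
  also have "\<dots> = (\<Sum>(y, r)\<in>T n \<times> PiE {..<n} T. F (r(n := y)))"
    by (subst sum.reindex) (auto intro!: inj_combinator simp: case_prod_beta)
  also have "\<dots> = (\<Sum>y\<in>T n. \<Sum>r\<in>PiE {..<n} T. F (r(n := y)))"
    using assms by (subst sum.cartesian_product) (auto intro!: finite_PiE)
  finally show ?thesis .
qed

lemma restrict_fun_upd_PiE:
  fixes n :: nat
  assumes "r \<in> PiE {..<n} T"
  shows "restrict (r(n := y)) {..<n} = r"
  using assms by (auto simp: PiE_def extensional_def fun_eq_iff)

lemma finite_basis [simp]: "finite (basis n)"
  unfolding basis_def by (intro finite_PiE) auto

lemma card_basis: "card (basis n) = 2 ^ n"
  unfolding basis_def by (simp add: card_PiE)

lemma copy_of_in_basis [simp]: "copy_of N b j \<in> basis N"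
  unfolding copy_of_def basis_def by auto

lemma sum_basis_Suc: "(\<Sum>c\<in>basis (Suc n). F c) = (\<Sum>y\<in>UNIV. \<Sum>r\<in>basis n. F (r(n := y)))"
  unfolding basis_def by (rule sum_PiE_lessThan_Suc) auto

lemma basis_Suc_eq_fun_upd:
  assumes "z \<in> basis (Suc n)"
  shows "(restrict z {..<n})(n := z n) = z"
  using assms by (auto simp: basis_def PiE_def extensional_def fun_eq_iff)

section \<open>Separability across the cut between qubit n and the rest\<close>

definition ensemble :: "'m set \<Rightarrow> ('m \<Rightarrow> 'x \<Rightarrow> complex) \<Rightarrow> 'x \<Rightarrow> 'x \<Rightarrow> complex" where
  "ensemble J U c c' = (\<Sum>m\<in>J. U m c * cnj (U m c'))"

lemma sum_sum_ensemble:
  "(\<Sum>c\<in>X. \<Sum>c'\<in>X. p c * ensemble J U c c' * q c') =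
    (\<Sum>m\<in>J. (\<Sum>c\<in>X. p c * U m c) * (\<Sum>c'\<in>X. cnj (U m c') * q c'))"
proof -
  have "(\<Sum>c\<in>X. \<Sum>c'\<in>X. p c * ensemble J U c c' * q c') =
      (\<Sum>c\<in>X. \<Sum>c'\<in>X. \<Sum>m\<in>J. (p c * U m c) * (cnj (U m c') * q c'))"
    unfolding ensemble_def by (simp add: sum_distrib_left sum_distrib_right mult_ac)
  also have "\<dots> = (\<Sum>c\<in>X. \<Sum>m\<in>J. \<Sum>c'\<in>X. (p c * U m c) * (cnj (U m c') * q c'))"
    by (intro sum.cong refl sum.swap)
  also have "\<dots> = (\<Sum>m\<in>J. \<Sum>c\<in>X. \<Sum>c'\<in>X. (p c * U m c) * (cnj (U m c') * q c'))"
    by (rule sum.swap)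
  also have "\<dots> = (\<Sum>m\<in>J. (\<Sum>c\<in>X. p c * U m c) * (\<Sum>c'\<in>X. cnj (U m c') * q c'))"
    by (simp add: sum_product)
  finally show ?thesis .
qed

lemma ensemble_scale:
  assumes "0 \<le> a"
  shows "ensemble J (\<lambda>m c. of_real (sqrt a) * U m c) c c' = of_real a * ensemble J U c c'"
  unfolding ensemble_def sum_distrib_left
  by (intro sum.cong refl)
    (simp add: assms mult_ac flip: of_real_mult[of "sqrt a" "sqrt a"])

definition cut_product :: "nat \<Rightarrow> ('a \<Rightarrow> complex) \<Rightarrow> ((nat \<Rightarrow> 'a) \<Rightarrow> complex) \<Rightarrow> (nat \<Rightarrow> 'a) \<Rightarrow> complex"
  where "cut_product n u v c = u (c n) * v (restrict c {..<n})"

lemma cut_product_fun_upd: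
  "r \<in> PiE {..<n} T \<Longrightarrow> cut_product n u v (r(n := y)) = u y * v r"
  unfolding cut_product_def by (simp add: restrict_fun_upd_PiE)

(* The index type is fixed to nat because a definition cannot quantify over types;
   cut_separableI accepts any finite index set. *)
definition cut_separable :: "nat \<Rightarrow> ((nat \<Rightarrow> bool) \<Rightarrow> (nat \<Rightarrow> bool) \<Rightarrow> complex) \<Rightarrow> bool" where
  "cut_separable n R \<longleftrightarrow> (\<exists>(I :: nat set) u v. finite I \<and>
     (\<forall>z\<in>basis (Suc n). \<forall>w\<in>basis (Suc n). R z w = ensemble I (\<lambda>m. cut_product n (u m) (v m)) z w))"

lemma cut_separableI:
  assumes "finite J"
    and "\<And>z w. z \<in> basis (Suc n) \<Longrightarrow> w \<in> basis (Suc n) \<Longrightarrow>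
      R z w = ensemble J (\<lambda>m. cut_product n (u m) (v m)) z w"
  shows "cut_separable n R"
proof -
  obtain h where h: "bij_betw h {0..<card J} J"
    using ex_bij_betw_nat_finite[OF assms(1)] by blast
  have "ensemble J (\<lambda>m. cut_product n (u m) (v m)) z w =
      ensemble {0..<card J} (\<lambda>i. cut_product n (u (h i)) (v (h i))) z w" for z w
    unfolding ensemble_def by (rule sum.reindex_bij_betw[OF h, symmetric])
  then show ?thesis
    unfolding cut_separable_def using assms(2)
    by (intro exI[of _ "{0..<card J}"] exI[of _ "\<lambda>i. u (h i)"] exI[of _ "\<lambda>i. v (h i)"]) simp
qed

section \<open>Copies and local operations preserve separability\<close>

lemma tensor_power_ensemble:
  assumes "finite I"
    and "\<And>z w. z \<in> basis N \<Longrightarrow> w \<in> basis N \<Longrightarrow> rho z w = ensemble I f z w"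
  shows "tensor_power N k rho =
    ensemble (PiE {..<k} (\<lambda>_. I)) (\<lambda>M b. \<Prod>j<k. f (M j) (copy_of N b j))"
proof (intro ext)
  fix b b'
  have "tensor_power N k rho b b' =
      (\<Prod>j<k. \<Sum>m\<in>I. f m (copy_of N b j) * cnj (f m (copy_of N b' j)))"
    unfolding tensor_power_def using assms(2) by (simp add: ensemble_def)
  also have "\<dots> = (\<Sum>M\<in>PiE {..<k} (\<lambda>_. I).
      \<Prod>j<k. f (M j) (copy_of N b j) * cnj (f (M j) (copy_of N b' j)))"
    using assms(1) by (rule prod_sum_PiE[OF finite_lessThan])
  also have "\<dots> = ensemble (PiE {..<k} (\<lambda>_. I)) (\<lambda>M b. \<Prod>j<k. f (M j) (copy_of N b j)) b b'"
    unfolding ensemble_def by (simp add: prod.distrib)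
  finally show "tensor_power N k rho b b' = \<dots>" .
qed

lemma prod_cut_product_copy_of:
  "(\<Prod>j<k. cut_product n (u (M j)) (v (M j)) (copy_of (Suc n) b j)) =
    cut_product n (\<lambda>y. \<Prod>j<k. u (M j) (y j)) (\<lambda>r. \<Prod>j<k. v (M j) (copy_of n r j)) b"
proof -
  have "restrict (copy_of (Suc n) b j) {..<n} = copy_of n (restrict b {..<n}) j" for j
    unfolding copy_of_def by (auto simp: fun_eq_iff)
  then show ?thesis
    unfolding cut_product_def by (simp add: prod.distrib copy_of_def)
qed

definition slocc_apply ::
  "nat \<Rightarrow> nat \<Rightarrow> (nat \<Rightarrow> bool \<Rightarrow> (nat \<Rightarrow> bool) \<Rightarrow> complex) \<Rightarrow> ((nat \<Rightarrow> nat \<Rightarrow> bool) \<Rightarrow> complex)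
     \<Rightarrow> (nat \<Rightarrow> bool) \<Rightarrow> complex" where
  "slocc_apply N k A F c = (\<Sum>b\<in>copies_basis N k. (\<Prod>i<N. A i (c i) (b i)) * F b)"

lemma slocc_output_ensemble:
  "slocc_output N k A (ensemble J F) = ensemble J (\<lambda>m. slocc_apply N k A (F m))"
proof (intro ext)
  fix c c'
  show "slocc_output N k A (ensemble J F) c c' = ensemble J (\<lambda>m. slocc_apply N k A (F m)) c c'"
    unfolding slocc_output_def sum_sum_ensemble
    by (simp add: ensemble_def slocc_apply_def mult.commute)
qed

lemma slocc_apply_cut_product:
  "slocc_apply (Suc n) k A (cut_product n u v) =
    cut_product n (\<lambda>t. \<Sum>y\<in>PiE {..<k} (\<lambda>_. UNIV). A n t y * u y) (slocc_apply n k A v)"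
proof (intro ext)
  fix c
  let ?T = "\<lambda>_::nat. PiE {..<k} (\<lambda>_::nat. UNIV :: bool set)"
  have "slocc_apply (Suc n) k A (cut_product n u v) c =
      (\<Sum>y\<in>?T n. \<Sum>r\<in>PiE {..<n} ?T.
        (\<Prod>i<Suc n. A i (c i) ((r(n := y)) i)) * cut_product n u v (r(n := y)))"
    unfolding slocc_apply_def copies_basis_def
    by (rule sum_PiE_lessThan_Suc) (auto intro: finite_PiE)
  also have "\<dots> = (\<Sum>y\<in>?T n. \<Sum>r\<in>PiE {..<n} ?T.
      (A n (c n) y * u y) * ((\<Prod>i<n. A i (c i) (r i)) * v r))"
    by (intro sum.cong refl) (simp add: cut_product_fun_upd prod.lessThan_Suc mult_ac)
  also have "\<dots> = cut_product n (\<lambda>t. \<Sum>y\<in>?T n. A n t y * u y) (slocc_apply n k A v) c"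
    unfolding cut_product_def slocc_apply_def copies_basis_def sum_product
    by (simp add: sum_distrib_left)
  finally show "slocc_apply (Suc n) k A (cut_product n u v) c = \<dots>" .
qed

lemma slocc_tensor_power_cut_separable:
  assumes "cut_separable n rho"
  shows "cut_separable n (slocc_output (Suc n) k A (tensor_power (Suc n) k rho))"
proof -
  obtain I :: "nat set" and u v where "finite I" and rho:
    "\<And>z w. z \<in> basis (Suc n) \<Longrightarrow> w \<in> basis (Suc n) \<Longrightarrow>
      rho z w = ensemble I (\<lambda>m. cut_product n (u m) (v m)) z w"
    using assms unfolding cut_separable_def by blast
  define J where "J = PiE {..<k} (\<lambda>_. I)"
  define u' where "u' M y = (\<Prod>j<k. u (M j) (y j))" for M y
  define v' where "v' M r = (\<Prod>j<k. v (M j) (copy_of n r j))" for M r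
  have "tensor_power (Suc n) k rho = ensemble J (\<lambda>M. cut_product n (u' M) (v' M))"
    unfolding J_def u'_def v'_def
    by (subst tensor_power_ensemble[OF \<open>finite I\<close> rho]) (simp_all add: prod_cut_product_copy_of)
  then have "slocc_output (Suc n) k A (tensor_power (Suc n) k rho) =
      ensemble J (\<lambda>M. cut_product n (\<lambda>t. \<Sum>y\<in>PiE {..<k} (\<lambda>_. UNIV). A n t y * u' M y)
        (slocc_apply n k A (v' M)))"
    by (simp add: slocc_output_ensemble slocc_apply_cut_product)
  moreover have "finite J"
    unfolding J_def using \<open>finite I\<close> by (intro finite_PiE) auto
  ultimately show ?thesis
    by (intro cut_separableI) simp_all
qed

section \<open>Fidelity of separable states\<close>

lemma trace_op_ensemble:
  "trace_op N (ensemble J U) = of_real (\<Sum>m\<in>J. \<Sum>c\<in>basis N. (cmod (U m c))\<^sup>2)"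
  unfolding trace_op_def ensemble_def of_real_sum complex_norm_square by (rule sum.swap)

lemma fidelity_ensemble:
  "fidelity N \<psi> (ensemble J U) =
    (\<Sum>m\<in>J. (cmod (\<Sum>c\<in>basis N. cnj (\<psi> c) * U m c))\<^sup>2) / (\<Sum>m\<in>J. \<Sum>c\<in>basis N. (cmod (U m c))\<^sup>2)"
proof -
  have "(\<Sum>c\<in>basis N. \<Sum>c'\<in>basis N. cnj (\<psi> c) * ensemble J U c c' * \<psi> c') =
      of_real (\<Sum>m\<in>J. (cmod (\<Sum>c\<in>basis N. cnj (\<psi> c) * U m c))\<^sup>2)"
    unfolding sum_sum_ensemble of_real_sum complex_norm_square by (simp add: mult_ac)
  then show ?thesis
    unfolding fidelity_def trace_op_ensemble by (simp add: Re_divide_of_real)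
qed

lemma trace_op_cong:
  "(\<And>z w. z \<in> basis N \<Longrightarrow> w \<in> basis N \<Longrightarrow> S z w = S' z w) \<Longrightarrow> trace_op N S = trace_op N S'"
  unfolding trace_op_def by simp

lemma fidelity_cong:
  "(\<And>z w. z \<in> basis N \<Longrightarrow> w \<in> basis N \<Longrightarrow> S z w = S' z w) \<Longrightarrow> fidelity N \<psi> S = fidelity N \<psi> S'"
  unfolding fidelity_def using trace_op_cong[of N S S'] by simp

(* The reduced state of qubit n is the maximally mixed state 1/2. *)
definition max_entangled_cut :: "nat \<Rightarrow> ((nat \<Rightarrow> bool) \<Rightarrow> complex) \<Rightarrow> bool" where
  "max_entangled_cut n \<psi> \<longleftrightarrow>
    (\<forall>t t'. (\<Sum>r\<in>basis n. cnj (\<psi> (r(n := t))) * \<psi> (r(n := t'))) = (if t = t' then 1/2 else 0))"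

lemma cut_product_overlap_le:
  assumes "max_entangled_cut n \<psi>"
  shows "(cmod (\<Sum>c\<in>basis (Suc n). cnj (\<psi> c) * cut_product n u v c))\<^sup>2
    \<le> 1/2 * (\<Sum>c\<in>basis (Suc n). (cmod (cut_product n u v c))\<^sup>2)"
proof -
  \<comment> \<open>The overlap with u (x) v is the overlap of phi with v, and phi has half the squared
    norm of u; Cauchy-Schwarz does the rest.\<close>
  define \<phi> where "\<phi> r = (\<Sum>t\<in>UNIV. cnj (u t) * \<psi> (r(n := t)))" for r
  have orth: "(\<Sum>r\<in>basis n. \<psi> (r(n := t)) * cnj (\<psi> (r(n := t')))) = (if t = t' then 1/2 else 0)" for t t'
    using arg_cong[where f = cnj, OF assms[unfolded max_entangled_cut_def, rule_format, of t t']]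
    by (simp add: mult.commute)
  have overlap: "(\<Sum>c\<in>basis (Suc n). cnj (\<psi> c) * cut_product n u v c) = (\<Sum>r\<in>basis n. cnj (\<phi> r) * v r)"
  proof -
    have "(\<Sum>c\<in>basis (Suc n). cnj (\<psi> c) * cut_product n u v c) =
        (\<Sum>t\<in>UNIV. \<Sum>r\<in>basis n. cnj (\<psi> (r(n := t))) * (u t * v r))"
      unfolding sum_basis_Suc by (intro sum.cong refl) (simp add: basis_def cut_product_fun_upd)
    also have "\<dots> = (\<Sum>r\<in>basis n. cnj (\<phi> r) * v r)"
      unfolding \<phi>_def by (subst sum.swap) (simp add: sum_distrib_left mult_ac)
    finally show ?thesis .
  qed
  have norm_product: "(\<Sum>c\<in>basis (Suc n). (cmod (cut_product n u v c))\<^sup>2) =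
      (\<Sum>t\<in>UNIV. (cmod (u t))\<^sup>2) * (\<Sum>r\<in>basis n. (cmod (v r))\<^sup>2)"
    unfolding sum_basis_Suc sum_product
    by (intro sum.cong refl) (simp add: basis_def cut_product_fun_upd norm_mult power_mult_distrib)
  have norm_\<phi>: "(\<Sum>r\<in>basis n. (cmod (\<phi> r))\<^sup>2) = 1/2 * (\<Sum>t\<in>UNIV. (cmod (u t))\<^sup>2)"
  proof -
    have "complex_of_real (\<Sum>r\<in>basis n. (cmod (\<phi> r))\<^sup>2) = (\<Sum>r\<in>basis n. \<phi> r * cnj (\<phi> r))"
      by (simp only: of_real_sum complex_norm_square)
    also have "\<dots> = (\<Sum>t\<in>UNIV. \<Sum>t'\<in>UNIV. cnj (u t) * u t' *
        (\<Sum>r\<in>basis n. \<psi> (r(n := t)) * cnj (\<psi> (r(n := t')))))"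
      unfolding \<phi>_def by (simp add: UNIV_bool ring_distribs sum.distrib sum_distrib_left mult_ac)
    also have "\<dots> = of_real (1/2 * (\<Sum>t\<in>UNIV. (cmod (u t))\<^sup>2))"
      unfolding orth of_real_mult of_real_sum complex_norm_square by (simp add: UNIV_bool)
    finally show ?thesis
      using of_real_eq_iff by blast
  qed
  have "(cmod (\<Sum>r\<in>basis n. cnj (\<phi> r) * v r))\<^sup>2 \<le> (\<Sum>r\<in>basis n. cmod (\<phi> r) * cmod (v r))\<^sup>2"
    by (intro power_mono order.trans[OF norm_sum]) (simp_all add: norm_mult sum_nonneg)
  also have "\<dots> \<le> (\<Sum>r\<in>basis n. (cmod (\<phi> r))\<^sup>2) * (\<Sum>r\<in>basis n. (cmod (v r))\<^sup>2)"
    by (rule Cauchy_Schwarz_ineq_sum)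
  finally show ?thesis
    unfolding overlap norm_product norm_\<phi> by (simp add: mult_ac)
qed

lemma cut_separable_fidelity_le_half:
  assumes "max_entangled_cut n \<psi>" and "cut_separable n S" and "trace_op (Suc n) S \<noteq> 0"
  shows "fidelity (Suc n) \<psi> S \<le> 1/2"
proof -
  obtain I :: "nat set" and u v where S:
    "\<And>z w. z \<in> basis (Suc n) \<Longrightarrow> w \<in> basis (Suc n) \<Longrightarrow>
      S z w = ensemble I (\<lambda>m. cut_product n (u m) (v m)) z w"
    using assms(2) unfolding cut_separable_def by blast
  define overlaps where
    "overlaps = (\<Sum>m\<in>I. (cmod (\<Sum>c\<in>basis (Suc n). cnj (\<psi> c) * cut_product n (u m) (v m) c))\<^sup>2)"
  define norms where
    "norms = (\<Sum>m\<in>I. \<Sum>c\<in>basis (Suc n). (cmod (cut_product n (u m) (v m) c))\<^sup>2)"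
  have "of_real norms = trace_op (Suc n) S"
    unfolding norms_def trace_op_ensemble[symmetric] by (rule trace_op_cong) (simp add: S)
  with assms(3) have "norms \<noteq> 0"
    by (metis of_real_0)
  moreover have "norms \<ge> 0"
    unfolding norms_def by (intro sum_nonneg) auto
  ultimately have "norms > 0"
    by simp
  moreover have "overlaps \<le> norms / 2"
  proof -
    have "overlaps \<le> (\<Sum>m\<in>I. 1/2 * (\<Sum>c\<in>basis (Suc n). (cmod (cut_product n (u m) (v m) c))\<^sup>2))"
      unfolding overlaps_def by (intro sum_mono cut_product_overlap_le[OF assms(1)])
    then show ?thesis
      unfolding norms_def sum_distrib_left[symmetric] by simp
  qed
  moreover have "fidelity (Suc n) \<psi> S = overlaps / norms"
    unfolding overlaps_def norms_def fidelity_ensemble[symmetric] by (rule fidelity_cong) (simp add: S)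
  ultimately show ?thesis
    by (simp add: pos_divide_le_eq)
qed

section \<open>Separability of the depolarized state\<close>

definition six_state :: "nat \<Rightarrow> bool \<Rightarrow> complex" where
  "six_state j t =
    (if j = 0 then (if t then 0 else 1)
     else if j = 1 then (if t then 1 else 0)
     else (if t then \<i> ^ (j - 2) else 1))"

definition six_weight :: "nat \<Rightarrow> real" where
  "six_weight j = (if j < 2 then 1 else 1/2)"

(* The six states |0>, |1>, |0> + i^k |1> with squared weights 1, 1, 1/4, ..., 1/4 form a 2-design:
   sum_j w_j |s_j><s_j| (x) |conj s_j><conj s_j| = 1 + |Phi><Phi| with Phi = |00> + |11>. *)
lemma six_state_twirl:
  "(\<Sum>j<6. of_real ((six_weight j)\<^sup>2) * (six_state j y * cnj (six_state j y')) *
      ((\<Sum>t\<in>UNIV. cnj (six_state j t) * p t) * (\<Sum>t\<in>UNIV. six_state j t * q t))) =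
    (if y = y' then (\<Sum>t\<in>UNIV. p t * q t) else 0) + p y * q y'"
  by (cases y; cases y')
    (simp_all add: UNIV_bool numeral_eq_Suc six_state_def six_weight_def power2_eq_square
      power3_eq_cube algebra_simps field_simps)

(* When e False, e True are orthogonal of squared norm 1/2, this is the orthogonal projection
   onto their span. *)
definition rest_proj :: "(bool \<Rightarrow> 'r \<Rightarrow> complex) \<Rightarrow> 'r \<Rightarrow> 'r \<Rightarrow> complex" where
  "rest_proj e r s = 2 * (\<Sum>t\<in>UNIV. e t r * cnj (e t s))"

lemma cnj_rest_proj: "cnj (rest_proj e r s) = rest_proj e s r"
  by (simp add: rest_proj_def mult.commute)

lemma rest_proj_idem:
  assumes orth: "\<And>t t'. (\<Sum>s\<in>R. cnj (e t s) * e t' s) = (if t = t' then 1/2 else 0)"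
  shows "(\<Sum>s\<in>R. rest_proj e r s * cnj (rest_proj e r' s)) = rest_proj e r r'"
proof -
  have "(\<Sum>s\<in>R. rest_proj e r s * cnj (rest_proj e r' s)) =
      4 * (\<Sum>t\<in>UNIV. \<Sum>t'\<in>UNIV. e t r * cnj (e t' r') * (\<Sum>s\<in>R. cnj (e t s) * e t' s))"
    unfolding rest_proj_def by (simp add: UNIV_bool ring_distribs sum.distrib sum_distrib_left mult_ac)
  also have "\<dots> = rest_proj e r r'"
    unfolding orth rest_proj_def by (simp add: UNIV_bool)
  finally show ?thesis .
qed

lemma sum_delta_minus_rest_proj:
  assumes "finite R" and "r \<in> R" and "r' \<in> R"
    and orth: "\<And>t t'. (\<Sum>s\<in>R. cnj (e t s) * e t' s) = (if t = t' then 1/2 else 0)"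
  shows "(\<Sum>s\<in>R. ((if r = s then 1 else 0) - of_real D * rest_proj e r s) *
      cnj ((if r' = s then 1 else 0) - of_real D * rest_proj e r' s)) =
    (if r = r' then 1 else 0) - of_real (2 * D - D\<^sup>2) * rest_proj e r r'"
proof -
  have cnj_delta: "cnj (if b then 1 else 0) = (if b then 1 else 0)" for b
    by simp
  have delta_left: "(\<Sum>s\<in>R. (if a = s then 1 else 0) * f s) = f a" if "a \<in> R"
    for a and f :: "_ \<Rightarrow> complex"
    using assms(1) that by (simp add: if_distrib[of "\<lambda>c. c * _"] sum.delta' cong: if_cong)
  have delta_right: "(\<Sum>s\<in>R. f s * (if a = s then 1 else 0)) = f a" if "a \<in> R"
    for a and f :: "_ \<Rightarrow> complex"
    using delta_left[OF that, of f] by (simp add: mult.commute)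
  have "(\<Sum>s\<in>R. ((if r = s then 1 else 0) - of_real D * rest_proj e r s) *
      cnj ((if r' = s then 1 else 0) - of_real D * rest_proj e r' s)) =
    (\<Sum>s\<in>R. (if r = s then 1 else 0) * (if r' = s then 1 else 0))
      - of_real D * (\<Sum>s\<in>R. (if r = s then 1 else 0) * rest_proj e s r')
      - of_real D * (\<Sum>s\<in>R. rest_proj e r s * (if r' = s then 1 else 0))
      + of_real D * of_real D * (\<Sum>s\<in>R. rest_proj e r s * cnj (rest_proj e r' s))"
    by (simp add: cnj_rest_proj cnj_delta ring_distribs sum.distrib sum_subtractf
      sum_distrib_left mult_ac)
  also have "\<dots> = (if r = r' then 1 else 0) - of_real (2 * D - D\<^sup>2) * rest_proj e r r'"
    unfolding delta_left[OF assms(2)] delta_right[OF assms(3)] rest_proj_idem[OF orth]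
    by (simp add: algebra_simps power2_eq_square)
  finally show ?thesis .
qed

(* Product vectors decomposing 1 + x |psi><psi| = x (1 (x) P/2 + |psi><psi|) + 1 (x) (1 - (x/2) P),
   with P = rest_proj e: the first term is the twirl of six_state_twirl, the second is the square
   (1 - D P)^2 with D = 1 - sqrt (1 - x/2), which is real exactly when x <= 2. *)
definition iso_qubit :: "real \<Rightarrow> nat + bool \<times> 'r \<Rightarrow> bool \<Rightarrow> complex" where
  "iso_qubit x m t = (case m of
      Inl j \<Rightarrow> of_real (sqrt x * six_weight j) * six_state j t
    | Inr (y, _) \<Rightarrow> (if t = y then 1 else 0))"

definition iso_rest :: "real \<Rightarrow> (bool \<Rightarrow> 'r \<Rightarrow> complex) \<Rightarrow> nat + bool \<times> 'r \<Rightarrow> 'r \<Rightarrow> complex" where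
  "iso_rest x e m r = (case m of
      Inl j \<Rightarrow> (\<Sum>t\<in>UNIV. cnj (six_state j t) * e t r)
    | Inr (_, s) \<Rightarrow> (if r = s then 1 else 0) - of_real (1 - sqrt (1 - x / 2)) * rest_proj e r s)"

lemma iso_qubit_iso_rest_Inl:
  assumes "0 \<le> x"
  shows "iso_qubit x (Inl j) y * iso_rest x e (Inl j) r * cnj (iso_qubit x (Inl j) y' * iso_rest x e (Inl j) r') =
    of_real x * (of_real ((six_weight j)\<^sup>2) * (six_state j y * cnj (six_state j y')) *
      ((\<Sum>t\<in>UNIV. cnj (six_state j t) * e t r) * (\<Sum>t\<in>UNIV. six_state j t * cnj (e t r'))))"
proof -
  let ?c = "complex_of_real (sqrt x * six_weight j)"
  have "sqrt x * six_weight j * (sqrt x * six_weight j) = x * (six_weight j)\<^sup>2"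
    using assms by (simp add: power2_eq_square mult_ac)
  then have c: "?c * cnj ?c = of_real (x * (six_weight j)\<^sup>2)"
    by (metis complex_cnj_complex_of_real of_real_mult)
  have "iso_qubit x (Inl j) y * iso_rest x e (Inl j) r * cnj (iso_qubit x (Inl j) y' * iso_rest x e (Inl j) r') =
    ?c * cnj ?c * (six_state j y * cnj (six_state j y') *
      ((\<Sum>t\<in>UNIV. cnj (six_state j t) * e t r) * (\<Sum>t\<in>UNIV. six_state j t * cnj (e t r'))))"
    unfolding iso_qubit_def iso_rest_def by (simp add: mult_ac)
  then show ?thesis
    unfolding c by (simp add: mult_ac)
qed

lemma sum_iso_Inl:
  assumes "0 \<le> x"
  shows "(\<Sum>j<6. iso_qubit x (Inl j) y * iso_rest x e (Inl j) r *
      cnj (iso_qubit x (Inl j) y' * iso_rest x e (Inl j) r')) =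
    of_real x * ((if y = y' then rest_proj e r r' / 2 else 0) + e y r * cnj (e y' r'))"
  unfolding iso_qubit_iso_rest_Inl[OF assms] sum_distrib_left[symmetric] six_state_twirl
  by (simp add: rest_proj_def)

lemma sum_iso_Inr:
  assumes "finite R" and "r \<in> R" and "r' \<in> R"
    and orth: "\<And>t t'. (\<Sum>s\<in>R. cnj (e t s) * e t' s) = (if t = t' then 1/2 else 0)"
    and "x \<le> 2"
  shows "(\<Sum>p\<in>UNIV \<times> R. iso_qubit x (Inr p) y * iso_rest x e (Inr p) r *
      cnj (iso_qubit x (Inr p) y' * iso_rest x e (Inr p) r')) =
    (if y = y' then 1 else 0) * ((if r = r' then 1 else 0) - of_real (x / 2) * rest_proj e r r')"
proof -
  let ?D = "1 - sqrt (1 - x / 2)"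
  have split: "(\<Sum>p\<in>UNIV \<times> R. iso_qubit x (Inr p) y * iso_rest x e (Inr p) r *
      cnj (iso_qubit x (Inr p) y' * iso_rest x e (Inr p) r')) =
    (\<Sum>t\<in>UNIV. (if y = t then 1 else 0) * (if y' = t then 1 else 0)) *
    (\<Sum>s\<in>R. ((if r = s then 1 else 0) - of_real ?D * rest_proj e r s) *
      cnj ((if r' = s then 1 else 0) - of_real ?D * rest_proj e r' s))"
    unfolding sum_product sum.cartesian_product iso_qubit_def iso_rest_def
    by (intro sum.cong refl) (auto simp: mult_ac)
  have D: "2 * ?D - ?D\<^sup>2 = x / 2"
    using assms(5) by (simp add: power2_eq_square algebra_simps)
  have rest: "(\<Sum>s\<in>R. ((if r = s then 1 else 0) - of_real ?D * rest_proj e r s) *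
      cnj ((if r' = s then 1 else 0) - of_real ?D * rest_proj e r' s)) =
    (if r = r' then 1 else 0) - of_real (x / 2) * rest_proj e r r'"
    using sum_delta_minus_rest_proj[OF assms(1-3) orth, of ?D] unfolding D .
  show ?thesis
    unfolding split rest by (simp add: UNIV_bool)
qed

lemma isotropic_decomposition:
  assumes "finite R"
    and orth: "\<And>t t'. (\<Sum>s\<in>R. cnj (e t s) * e t' s) = (if t = t' then 1/2 else 0)"
    and "0 \<le> x" and "x \<le> 2" and "r \<in> R" and "r' \<in> R"
  shows "(\<Sum>m\<in>{..<6} <+> UNIV \<times> R.
      iso_qubit x m y * iso_rest x e m r * cnj (iso_qubit x m y' * iso_rest x e m r')) =
    (if y = y' \<and> r = r' then 1 else 0) + of_real x * e y r * cnj (e y' r')"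
proof -
  have plus: "(\<Sum>m\<in>{..<6} <+> UNIV \<times> R. F m) = (\<Sum>j<6. F (Inl j)) + (\<Sum>p\<in>UNIV \<times> R. F (Inr p))"
    for F :: "nat + bool \<times> _ \<Rightarrow> complex"
    using assms(1) by (simp add: sum.Plus)
  show ?thesis
    unfolding plus sum_iso_Inl[OF assms(3)] sum_iso_Inr[OF assms(1,5,6) orth assms(4)]
    by (cases "y = y'"; cases "r = r'") (simp_all add: algebra_simps)
qed

lemma isotropic_cut_separable:
  assumes "max_entangled_cut n \<psi>" and "0 \<le> x" and "x \<le> 2" and "0 < K"
  shows "cut_separable n (\<lambda>z w. ((if z = w then 1 else 0) + of_real x * \<psi> z * cnj (\<psi> w)) / of_real K)"
proof -
  define e where "e t r = \<psi> (r(n := t))" for t r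
  have orth: "(\<Sum>s\<in>basis n. cnj (e t s) * e t' s) = (if t = t' then 1/2 else 0)" for t t'
    using assms(1) unfolding max_entangled_cut_def e_def by blast
  let ?I = "{..<6} <+> UNIV \<times> basis n"
  let ?u = "\<lambda>m t. of_real (sqrt (1 / K)) * iso_qubit x m t"
  show ?thesis
  proof (rule cut_separableI[where J = ?I and u = ?u and v = "iso_rest x e"])
    fix z w
    assume z: "z \<in> basis (Suc n)" and w: "w \<in> basis (Suc n)"
    let ?rz = "restrict z {..<n}" and ?rw = "restrict w {..<n}"
    have "?rz \<in> basis n" and "?rw \<in> basis n"
      using z w unfolding basis_def by auto
    then have dec: "ensemble ?I (\<lambda>m. cut_product n (iso_qubit x m) (iso_rest x e m)) z w =
        (if z n = w n \<and> ?rz = ?rw then 1 else 0) + of_real x * e (z n) ?rz * cnj (e (w n) ?rw)"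
      unfolding ensemble_def cut_product_def
      by (intro isotropic_decomposition[OF _ orth assms(2,3)]) simp_all
    have eq: "(z n = w n \<and> ?rz = ?rw) = (z = w)"
    proof
      assume "z n = w n \<and> ?rz = ?rw"
      then have "(restrict z {..<n})(n := z n) = (restrict w {..<n})(n := w n)"
        by simp
      then show "z = w"
        unfolding basis_Suc_eq_fun_upd[OF z] basis_Suc_eq_fun_upd[OF w] .
    qed simp
    have "e (z n) ?rz = \<psi> z" and "e (w n) ?rw = \<psi> w"
      unfolding e_def using basis_Suc_eq_fun_upd[OF z] basis_Suc_eq_fun_upd[OF w] by simp_all
    moreover have "(\<lambda>m. cut_product n (?u m) (iso_rest x e m)) =
        (\<lambda>m c. of_real (sqrt (1 / K)) * cut_product n (iso_qubit x m) (iso_rest x e m) c)"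
      by (simp add: cut_product_def fun_eq_iff mult.assoc)
    ultimately show "((if z = w then 1 else 0) + of_real x * \<psi> z * cnj (\<psi> w)) / of_real K =
        ensemble ?I (\<lambda>m. cut_product n (?u m) (iso_rest x e m)) z w"
      using assms(4) dec unfolding eq by (simp add: ensemble_scale divide_inverse_commute)
  qed simp
qed

section \<open>Graph states\<close>

lemma card_edges_fun_upd_True:
  "card {(i, j). i < j \<and> j < Suc n \<and> E i j \<and> (r(n := True)) i \<and> (r(n := True)) j} =
    card {(i, j). i < j \<and> j < Suc n \<and> E i j \<and> (r(n := False)) i \<and> (r(n := False)) j}
    + card {i. i < n \<and> E i n \<and> r i}"
proof -
  let ?old = "{(i, j). i < j \<and> j < Suc n \<and> E i j \<and> (r(n := False)) i \<and> (r(n := False)) j}"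
  let ?new = "(\<lambda>i. (i, n)) ` {i. i < n \<and> E i n \<and> r i}"
  have "{(i, j). i < j \<and> j < Suc n \<and> E i j \<and> (r(n := True)) i \<and> (r(n := True)) j} = ?old \<union> ?new"
    by (auto simp: less_Suc_eq)
  moreover have "finite ?old"
    by (rule finite_subset[of _ "{..<Suc n} \<times> {..<Suc n}"]) auto
  moreover have "?old \<inter> ?new = {}"
    by auto
  moreover have "card ?new = card {i. i < n \<and> E i n \<and> r i}"
    by (rule card_image) (auto simp: inj_on_def)
  ultimately show ?thesis
    by (simp add: card_Un_disjoint)
qed

lemma graph_state_fun_upd_True:
  "graph_state (Suc n) E (r(n := True)) =
    (-1) ^ card {i. i < n \<and> E i n \<and> r i} * graph_state (Suc n) E (r(n := False))"
  unfolding graph_state_def card_edges_fun_upd_True by (simp add: power_add)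

lemma cnj_graph_state_mult_self: "cnj (graph_state N E z) * graph_state N E z = 1 / 2 ^ N"
proof -
  have "((-1::real) ^ m / sqrt (2 ^ N)) * ((-1) ^ m / sqrt (2 ^ N)) = 1 / 2 ^ N" for m
    by (simp flip: power_add mult_2)
  then show ?thesis
    unfolding graph_state_def by (simp flip: of_real_mult)
qed

lemma sum_neg_one_power_card_eq_0:
  assumes "j \<in> S" and "S \<subseteq> {..<n}"
  shows "(\<Sum>r\<in>basis n. (-1 :: 'a :: field_char_0) ^ card {i \<in> S. r i}) = 0"
proof -
  define f :: "(nat \<Rightarrow> bool) \<Rightarrow> 'a" where "f r = (-1) ^ card {i \<in> S. r i}" for r
  define flip where "flip r = r(j := \<not> r j)" for r :: "nat \<Rightarrow> bool"
  have flip_basis: "flip r \<in> basis n" if "r \<in> basis n" for r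
    using that assms unfolding basis_def flip_def by (auto simp: PiE_def extensional_def)
  have flip_flip: "flip (flip r) = r" for r
    unfolding flip_def by simp
  have f_flip: "f (flip r) = - f r" for r
  proof -
    have fin: "finite S"
      using assms(2) by (rule finite_subset) simp
    show ?thesis
    proof (cases "r j")
      case True
      then have "{i \<in> S. r i} = insert j {i \<in> S. flip r i}" and "j \<notin> {i \<in> S. flip r i}"
        using assms(1) unfolding flip_def by auto
      then show ?thesis
        unfolding f_def using fin by simp
    next
      case False
      then have "{i \<in> S. flip r i} = insert j {i \<in> S. r i}" and "j \<notin> {i \<in> S. r i}"
        using assms(1) unfolding flip_def by auto
      then show ?thesis
        unfolding f_def using fin by simp
    qed
  qed
  have "(\<Sum>r\<in>basis n. f r) = (\<Sum>r\<in>basis n. f (flip r))"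
    by (rule sum.reindex_bij_witness[of _ flip flip]) (auto simp: flip_basis flip_flip)
  also have "\<dots> = - (\<Sum>r\<in>basis n. f r)"
    by (simp add: f_flip sum_negf)
  finally show ?thesis
    unfolding f_def by simp
qed

lemma cnj_graph_state_mult_fun_upd:
  "cnj (graph_state (Suc n) E (r(n := t))) * graph_state (Suc n) E (r(n := t')) =
    (if t = t' then 1 else (-1) ^ card {i. i < n \<and> E i n \<and> r i}) / 2 ^ Suc n"
proof -
  let ?\<psi> = "graph_state (Suc n) E"
  let ?a = "?\<psi> (r(n := False))" and ?s = "(-1 :: complex) ^ card {i. i < n \<and> E i n \<and> r i}"
  consider "t = t'" | "t = False" and "t' = True" | "t = True" and "t' = False"
    by auto
  then show ?thesis
  proof cases
    case 1
    then show ?thesis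
      by (simp add: cnj_graph_state_mult_self)
  next
    case 2
    have "cnj ?a * ?\<psi> (r(n := True)) = ?s * (cnj ?a * ?a)"
      unfolding graph_state_fun_upd_True by (rule mult.left_commute)
    with 2 show ?thesis
      by (simp add: cnj_graph_state_mult_self)
  next
    case 3
    have "cnj (?\<psi> (r(n := True))) * ?a = ?s * (cnj ?a * ?a)"
      unfolding graph_state_fun_upd_True by (simp add: mult.assoc)
    with 3 show ?thesis
      by (simp add: cnj_graph_state_mult_self)
  qed
qed

lemma graph_state_max_entangled_cut:
  assumes "j < n" and "E j n"
  shows "max_entangled_cut n (graph_state (Suc n) E)"
proof -
  have "{i \<in> {i. i < n \<and> E i n}. r i} = {i. i < n \<and> E i n \<and> r i}" for r
    by auto
  then have parity: "(\<Sum>r\<in>basis n. (-1 :: complex) ^ card {i. i < n \<and> E i n \<and> r i}) = 0"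
    using sum_neg_one_power_card_eq_0[of j "{i. i < n \<and> E i n}" n] assms by auto
  show ?thesis
    unfolding max_entangled_cut_def cnj_graph_state_mult_fun_upd
    by (simp add: sum_divide_distrib[symmetric] card_basis parity)
qed

lemma connected_graph_last_neighbour:
  assumes "connected_graph (Suc n) E" and "0 < n"
  obtains j where "j < n" and "E j n"
proof -
  have "E\<^sup>*\<^sup>* n 0"
    using assms unfolding connected_graph_def by simp
  then obtain j where "E n j"
    using assms(2) by (cases rule: converse_rtranclpE) auto
  then have "j < n" and "E j n"
    using assms(1) unfolding connected_graph_def simple_graph_def by (auto simp: less_Suc_eq)
  then show ?thesis
    by (rule that)
qed

theorem mainTheorem4:
  fixes N :: nat and E :: "nat \<Rightarrow> nat \<Rightarrow> bool" and x :: real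
  assumes "connected_graph N E"
    and "N \<ge> 2"
    and "0 \<le> x"
    and "x \<le> 2"
  shows "\<not> purifiable N (depol_state N E x) (graph_state N E)"
proof
  let ?S = "\<lambda>k A. slocc_output N k A (tensor_power N k (depol_state N E x))"
  assume "purifiable N (depol_state N E x) (graph_state N E)"
  moreover have "(1/4 :: real) > 0"
    by simp
  ultimately obtain k A where
    tr: "trace_op N (?S k A) \<noteq> 0" and fid: "fidelity N (graph_state N E) (?S k A) \<ge> 1 - 1/4"
    unfolding purifiable_def Let_def by blast
  obtain n where N: "N = Suc n" and "0 < n"
    using assms(2) by (cases N) auto
  then obtain j where "j < n" and "E j n"
    using assms(1) connected_graph_last_neighbour by blast
  then have ent: "max_entangled_cut n (graph_state N E)"
    unfolding N by (rule graph_state_max_entangled_cut)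
  then have "cut_separable n (depol_state N E x)"
    unfolding depol_state_def[abs_def]
    using isotropic_cut_separable[OF ent assms(3,4), of "2 ^ N + x"] assms(3) by (simp add: add_pos_nonneg)
  then have "cut_separable n (?S k A)"
    unfolding N by (rule slocc_tensor_power_cut_separable)
  then have "fidelity N (graph_state N E) (?S k A) \<le> 1/2"
    using cut_separable_fidelity_le_half[OF ent] tr unfolding N by blast
  with fid show False
    by simp
qed

end
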